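(* A map $M=(C_M,v_M,f_M)$ is orientable if and only if the $a$-map $M^a=(a_M\circ v_M,v_M,f_M)$ is orientable.
   Context: A map is a triple $M=(C_M,v_M,f_M)$ where $C_M$ is a finite cubic graph and $v_M,f_M$ are disjoint perfect matchings whose union is a disjoint union of 4-cycles; $a_M$ is the third perfect matching; each matching is viewed as a fixed-point-free involution on $V(C_M)$. $M$ is orientable if $C_M$ is bipartite. An $a$-map $A=(R,\Theta,\Phi)$ on a finite set $B$ is a triple of permutations with $\Theta\Phi=\Phi\Theta$, $\Theta^2=\Phi^2=\mathrm{id}$, $x,\Theta x,\Phi x,\Theta\Phi x$ distinct for all $x$, $R\Theta=\Theta R^{-1}$, and $R^n(x)\ne\Theta x$ for all integers $n$ and all $x$. $A$ is non-orientable if for some orbit of the group $\langle R,\Theta,\Phi\rangle$ the group $\langle R,\Theta\Phi\rangle$ acts transitively on that orbit; otherwise $A$ is orientable. *)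

theory Defs
  imports Main
begin

definition perfect_matching :: "'a set \<Rightarrow> ('a \<Rightarrow> 'a \<Rightarrow> bool) \<Rightarrow> ('a \<Rightarrow> 'a) \<Rightarrow> bool" where
  "perfect_matching V E m \<longleftrightarrow>
     (\<forall>x\<in>V. m x \<in> V \<and> m x \<noteq> x \<and> m (m x) = x \<and> E x (m x))"

definition finite_cubic_graph :: "'a set \<Rightarrow> ('a \<Rightarrow> 'a \<Rightarrow> bool) \<Rightarrow> bool" where
  "finite_cubic_graph V E \<longleftrightarrow> finite V \<and>
     (\<forall>x y. E x y \<longrightarrow> x \<in> V \<and> y \<in> V \<and> x \<noteq> y \<and> E y x) \<and>
     (\<forall>x\<in>V. card {y. E x y} = 3)"

text \<open>A map M = (C_M, v_M, f_M): v, f disjoint perfect matchings whose union is a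
  disjoint union of 4-cycles (equivalently, v f = f v, the cycles being x, v x, f v x, v f v x).\<close>
definition is_map :: "'a set \<Rightarrow> ('a \<Rightarrow> 'a \<Rightarrow> bool) \<Rightarrow> ('a \<Rightarrow> 'a) \<Rightarrow> ('a \<Rightarrow> 'a) \<Rightarrow> bool" where
  "is_map V E v f \<longleftrightarrow> finite_cubic_graph V E \<and>
     perfect_matching V E v \<and> perfect_matching V E f \<and>
     (\<forall>x\<in>V. v x \<noteq> f x) \<and>
     (\<forall>x\<in>V. v (f x) = f (v x))"

definition amatch :: "('a \<Rightarrow> 'a \<Rightarrow> bool) \<Rightarrow> ('a \<Rightarrow> 'a) \<Rightarrow> ('a \<Rightarrow> 'a) \<Rightarrow> 'a \<Rightarrow> 'a" where
  "amatch E v f x = (THE y. E x y \<and> y \<noteq> v x \<and> y \<noteq> f x)"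

text \<open>A map is orientable iff its graph is bipartite.\<close>
definition bipartite :: "'a set \<Rightarrow> ('a \<Rightarrow> 'a \<Rightarrow> bool) \<Rightarrow> bool" where
  "bipartite V E \<longleftrightarrow> (\<exists>c :: 'a \<Rightarrow> bool. \<forall>x\<in>V. \<forall>y\<in>V. E x y \<longrightarrow> c x \<noteq> c y)"

definition map_orientable :: "'a set \<Rightarrow> ('a \<Rightarrow> 'a \<Rightarrow> bool) \<Rightarrow> ('a \<Rightarrow> 'a) \<Rightarrow> ('a \<Rightarrow> 'a) \<Rightarrow> bool" where
  "map_orientable V E v f \<longleftrightarrow> bipartite V E"

text \<open>Orbit of x under the group generated by the permutations in gens (acting on B):
  reachability by applying generators and their inverses.\<close>
definition gen_step :: "'a set \<Rightarrow> ('a \<Rightarrow> 'a) set \<Rightarrow> ('a \<times> 'a) set" where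
  "gen_step B gens = {(y, g y) | y g. y \<in> B \<and> g \<in> gens} \<union> {(g y, y) | y g. y \<in> B \<and> g \<in> gens}"

definition gen_orbit :: "'a set \<Rightarrow> ('a \<Rightarrow> 'a) set \<Rightarrow> 'a \<Rightarrow> 'a set" where
  "gen_orbit B gens x = {y. (x, y) \<in> (gen_step B gens)\<^sup>*}"

definition amap_nonorientable :: "'a set \<Rightarrow> ('a \<Rightarrow> 'a) \<Rightarrow> ('a \<Rightarrow> 'a) \<Rightarrow> ('a \<Rightarrow> 'a) \<Rightarrow> bool" where
  "amap_nonorientable B R \<Theta> \<Phi> \<longleftrightarrow>
     (\<exists>x\<in>B. \<forall>y\<in>gen_orbit B {R, \<Theta>, \<Phi>} x. \<forall>z\<in>gen_orbit B {R, \<Theta>, \<Phi>} x.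
         z \<in> gen_orbit B {R, \<Theta> \<circ> \<Phi>} y)"

definition amap_orientable :: "'a set \<Rightarrow> ('a \<Rightarrow> 'a) \<Rightarrow> ('a \<Rightarrow> 'a) \<Rightarrow> ('a \<Rightarrow> 'a) \<Rightarrow> bool" where
  "amap_orientable B R \<Theta> \<Phi> \<longleftrightarrow> \<not> amap_nonorientable B R \<Theta> \<Phi>"

end

theory Submission
  imports Defs
begin

text \<open>A proper 2-colouring of \<open>C\<^sub>M\<close> is invariant under \<open>R = a v\<close> and \<open>v f\<close>, which are
  products of two matchings, while \<open>v\<close> changes the colour; so \<open>v x\<close> never lies in the
  \<open>\<langle>R, v f\<rangle>\<close>-orbit of \<open>x\<close>, and the a-map is orientable. Conversely, conjugation by \<open>v\<close>
  preserves the \<open>\<langle>R, v f\<rangle>\<close>-orbits, and every edge \<open>{p, q}\<close> puts \<open>q\<close> into the orbit of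
  \<open>v p\<close>. Hence each component of \<open>C\<^sub>M\<close> is the union of the orbits of \<open>p\<close> and \<open>v p\<close>; when these
  are distinct for every \<open>p\<close>, membership in a fixed one of them is a proper 2-colouring.\<close>

lemma walk_end_equiv_or_adjacent:
  assumes "sym Q" "trans Q" "(r, r) \<in> Q"
    and E_sym: "\<And>x y. E x y \<Longrightarrow> E y x"
    and neighbours: "\<And>x y y'. E x y \<Longrightarrow> E x y' \<Longrightarrow> (y, y') \<in> Q"
    and "(r, z) \<in> {(x, y). E x y}\<^sup>*"
  shows "(z, r) \<in> Q \<or> (\<exists>w. (w, r) \<in> Q \<and> E w z)"
  using \<open>(r, z) \<in> _\<close>
proof (induction rule: rtrancl_induct)
  case base
  then show ?case using \<open>(r, r) \<in> Q\<close> by blast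
next
  case (step z z')
  then have "E z z'" by simp
  from step.IH show ?case
  proof
    assume "(z, r) \<in> Q"
    then show ?case using \<open>E z z'\<close> by blast
  next
    assume "\<exists>w. (w, r) \<in> Q \<and> E w z"
    then obtain w where "(w, r) \<in> Q" "E w z" by blast
    with \<open>E z z'\<close> have "(z', w) \<in> Q" using neighbours E_sym by blast
    then show ?case using \<open>(w, r) \<in> Q\<close> \<open>trans Q\<close> by (blast dest: transD)
  qed
qed

lemma bipartite_by_equivalence:
  assumes "refl_on V Q" "sym Q" "trans Q"
    and edge: "\<And>x y. E x y \<Longrightarrow> x \<in> V \<and> y \<in> V \<and> E y x"
    and neighbours: "\<And>x y x' y'. (x, y) \<in> Q \<Longrightarrow> E x x' \<Longrightarrow> E y y' \<Longrightarrow> (x', y') \<in> Q"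
    and no_edge: "\<And>x y. E x y \<Longrightarrow> (x, y) \<notin> Q"
  shows "bipartite V E"
proof -
  let ?W = "{(x, y). E x y}\<^sup>*"
  define root where "root y = (SOME r. (r, y) \<in> ?W)" for y
  have root: "(root y, y) \<in> ?W" for y
    unfolding root_def by (rule someI[of _ y]) simp
  have colour: "((p, root p) \<in> Q) \<noteq> ((q, root q) \<in> Q)" if "E p q" for p q
  proof -
    have "E q p" using edge[OF \<open>E p q\<close>] by blast
    have "(r, p) \<in> ?W \<longleftrightarrow> (r, q) \<in> ?W" for r
      using rtrancl_into_rtrancl[of r p _ q] rtrancl_into_rtrancl[of r q _ p] \<open>E p q\<close> \<open>E q p\<close>
      by blast
    then have "root q = root p" unfolding root_def by simp
    let ?r = "root p"
    have "?r \<in> V"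
      using root[of p] edge[OF \<open>E p q\<close>]
      by (cases rule: converse_rtranclE) (auto dest: edge[THEN conjunct1])
    then have "(?r, ?r) \<in> Q" using \<open>refl_on V Q\<close> by (simp add: refl_on_def)
    have walk: "(z, ?r) \<in> Q \<or> (\<exists>w. (w, ?r) \<in> Q \<and> E w z)" if "(?r, z) \<in> ?W" for z
    proof (rule walk_end_equiv_or_adjacent[OF \<open>sym Q\<close> \<open>trans Q\<close> \<open>(?r, ?r) \<in> Q\<close> _ _ that])
      show "E y x" if "E x y" for x y using edge[OF that] by blast
      show "(y, y') \<in> Q" if "E x y" "E x y'" for x y y'
        using neighbours[OF _ that] edge[OF \<open>E x y\<close>] \<open>refl_on V Q\<close> by (simp add: refl_on_def)
    qed
    have "(?r, q) \<in> ?W" using root[of p] \<open>E p q\<close> by (auto intro: rtrancl_into_rtrancl)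
    then have q_walk: "(q, ?r) \<in> Q \<or> (\<exists>w. (w, ?r) \<in> Q \<and> E w q)" by (rule walk)
    have p_walk: "(p, ?r) \<in> Q \<or> (\<exists>w. (w, ?r) \<in> Q \<and> E w p)" using root[of p] by (rule walk)
    have "(p, q) \<notin> Q" using no_edge[OF \<open>E p q\<close>] .
    show ?thesis
    proof
      assume same: "((p, root p) \<in> Q) = ((q, root q) \<in> Q)"
      show False
      proof (cases "(p, ?r) \<in> Q")
        case True
        with same have "(q, ?r) \<in> Q" using \<open>root q = root p\<close> by simp
        with True have "(p, q) \<in> Q" using \<open>sym Q\<close> \<open>trans Q\<close> by (blast dest: symD transD)
        with \<open>(p, q) \<notin> Q\<close> show False ..
      next
        case False
        with same have "(q, ?r) \<notin> Q" using \<open>root q = root p\<close> by simp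
        with False p_walk q_walk obtain w w' where
          "(w, ?r) \<in> Q" "E w p" "(w', ?r) \<in> Q" "E w' q" by blast
        then have "(w, w') \<in> Q" using \<open>sym Q\<close> \<open>trans Q\<close> by (blast dest: symD transD)
        then have "(p, q) \<in> Q" using neighbours \<open>E w p\<close> \<open>E w' q\<close> by blast
        with \<open>(p, q) \<notin> Q\<close> show False ..
      qed
    qed
  qed
  then show ?thesis
    unfolding bipartite_def by (intro exI[of _ "\<lambda>y. (y, root y) \<in> Q"]) blast
qed

lemma sym_gen_step: "sym (gen_step B gens)"
  unfolding gen_step_def sym_def by blast

lemma gen_step_rtrancl_invariant:
  assumes "\<And>g y. g \<in> gens \<Longrightarrow> y \<in> B \<Longrightarrow> c (g y) = c y"
    and "(x, y) \<in> (gen_step B gens)\<^sup>*"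
  shows "c y = c x"
  using \<open>(x, y) \<in> _\<close> by induction (auto simp: gen_step_def assms(1))

lemma gen_step_rtrancl_map:
  assumes "\<And>g y. g \<in> gens \<Longrightarrow> y \<in> B \<Longrightarrow> (h y, h (g y)) \<in> (gen_step B gens)\<^sup>*"
    and "(x, y) \<in> (gen_step B gens)\<^sup>*"
  shows "(h x, h y) \<in> (gen_step B gens)\<^sup>*"
  using \<open>(x, y) \<in> _\<close>
proof induction
  case base
  then show ?case by simp
next
  case (step y z)
  have "(h y, h z) \<in> (gen_step B gens)\<^sup>*"
    using step.hyps(2) assms(1) sym_rtrancl[OF sym_gen_step, of B gens]
    unfolding gen_step_def by (auto dest: symD)
  with step.IH show ?case by (rule rtrancl_trans)
qed

lemma amatch_third_neighbour:
  assumes G: "finite_cubic_graph V E" and "perfect_matching V E v" "perfect_matching V E f"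
    and "x \<in> V" "v x \<noteq> f x"
  shows "E x (amatch E v f x)" "amatch E v f x \<noteq> v x" "amatch E v f x \<noteq> f x"
    and "E x y \<Longrightarrow> y = v x \<or> y = f x \<or> y = amatch E v f x"
proof -
  let ?N = "{y. E x y}"
  have "finite ?N" "card ?N = 3"
    using G \<open>x \<in> V\<close> unfolding finite_cubic_graph_def by (auto intro: finite_subset)
  moreover have "v x \<in> ?N" "f x \<in> ?N"
    using assms(2-4) unfolding perfect_matching_def by auto
  ultimately have "card (?N - {v x, f x}) = 1"
    using \<open>v x \<noteq> f x\<close> by (simp add: card_Diff_subset)
  then obtain r where r: "?N - {v x, f x} = {r}" by (auto simp: card_Suc_eq)
  then have "amatch E v f x = r"
    unfolding amatch_def by (intro the_equality) auto
  with r show "E x (amatch E v f x)" "amatch E v f x \<noteq> v x" "amatch E v f x \<noteq> f x"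
    and "E x y \<Longrightarrow> y = v x \<or> y = f x \<or> y = amatch E v f x" by auto
qed

lemma perfect_matching_amatch:
  assumes "is_map V E v f"
  shows "perfect_matching V E (amatch E v f)"
  unfolding perfect_matching_def
proof
  fix x assume "x \<in> V"
  let ?a = "amatch E v f"
  have G: "finite_cubic_graph V E" and v: "perfect_matching V E v" and f: "perfect_matching V E f"
    and distinct: "\<forall>x\<in>V. v x \<noteq> f x"
    using assms unfolding is_map_def by auto
  note third = amatch_third_neighbour[OF G v f]
  have "E x (?a x)" "?a x \<noteq> v x" "?a x \<noteq> f x"
    using third \<open>x \<in> V\<close> distinct by auto
  moreover from \<open>E x (?a x)\<close> have "?a x \<in> V" "E (?a x) x" "?a x \<noteq> x"
    using G unfolding finite_cubic_graph_def by auto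
  moreover have "x \<noteq> v (?a x)" "x \<noteq> f (?a x)"
    using v f \<open>x \<in> V\<close> \<open>?a x \<in> V\<close> \<open>?a x \<noteq> v x\<close> \<open>?a x \<noteq> f x\<close>
    unfolding perfect_matching_def by metis+
  moreover have "v (?a x) \<noteq> f (?a x)" using distinct \<open>?a x \<in> V\<close> by blast
  ultimately show "?a x \<in> V \<and> ?a x \<noteq> x \<and> ?a (?a x) = x \<and> E x (?a x)"
    using third(4)[of "?a x" x] by auto
qed

locale cubic_map =
  fixes V :: "'a set" and E :: "'a \<Rightarrow> 'a \<Rightarrow> bool" and v f :: "'a \<Rightarrow> 'a"
  assumes map: "is_map V E v f"
begin

abbreviation a :: "'a \<Rightarrow> 'a" where "a \<equiv> amatch E v f"

\<comment> \<open>Both generators \<open>R = a v\<close> and \<open>v f\<close> are products of two matchings, hence the name.\<close>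
abbreviation even_rel :: "('a \<times> 'a) set" where
  "even_rel \<equiv> (gen_step V {a \<circ> v, v \<circ> f})\<^sup>*"

lemma edge: "E x y \<Longrightarrow> x \<in> V \<and> y \<in> V \<and> E y x"
  using map unfolding is_map_def finite_cubic_graph_def by blast

lemma
  assumes "x \<in> V"
  shows closed: "v x \<in> V" "f x \<in> V" "a x \<in> V"
    and involutive [simp]: "v (v x) = x" "f (f x) = x" "a (a x) = x"
    and commute: "v (f x) = f (v x)"
    and edges: "E x (v x)" "E x (f x)" "E x (a x)"
proof -
  have "perfect_matching V E v" "perfect_matching V E f" "perfect_matching V E a"
    and "v (f x) = f (v x)"
    using map perfect_matching_amatch[OF map] assms unfolding is_map_def by auto
  then show "v x \<in> V" "f x \<in> V" "a x \<in> V" "v (v x) = x" "f (f x) = x" "a (a x) = x"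
    and "v (f x) = f (v x)" and "E x (v x)" "E x (f x)" "E x (a x)"
    using assms unfolding perfect_matching_def by auto
qed

lemma neighbours:
  assumes "E x y"
  shows "y = v x \<or> y = f x \<or> y = a x"
proof -
  have "x \<in> V" using edge[OF assms] by blast
  with map show ?thesis
    using amatch_third_neighbour(4)[of V E v f x y] assms unfolding is_map_def by blast
qed

lemma sym_even_rel: "sym even_rel"
  by (rule sym_rtrancl[OF sym_gen_step])

lemma trans_even_rel: "trans even_rel"
  by (rule trans_rtrancl)

lemma even_rel_sym: "(x, y) \<in> even_rel \<Longrightarrow> (y, x) \<in> even_rel"
  using sym_even_rel by (rule symD)

lemma even_rel_trans: "(x, y) \<in> even_rel \<Longrightarrow> (y, z) \<in> even_rel \<Longrightarrow> (x, z) \<in> even_rel"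
  by (rule rtrancl_trans)

lemma even_rel_v:
  assumes "(x, y) \<in> even_rel"
  shows "(v x, v y) \<in> even_rel"
proof (rule gen_step_rtrancl_map[OF _ assms])
  fix g y assume g: "g \<in> {a \<circ> v, v \<circ> f}" and "y \<in> V"
  let ?z = "v (a (v y))"
  have "?z \<in> V" using \<open>y \<in> V\<close> by (simp add: closed)
  then have "(?z, (a \<circ> v) ?z) \<in> gen_step V {a \<circ> v, v \<circ> f}"
    unfolding gen_step_def by blast
  moreover have "(a \<circ> v) ?z = v y" using \<open>y \<in> V\<close> by (simp add: closed)
  ultimately have "(v y, v ((a \<circ> v) y)) \<in> gen_step V {a \<circ> v, v \<circ> f}"
    using symD[OF sym_gen_step] by simp
  moreover have "(v y, (v \<circ> f) (v y)) \<in> gen_step V {a \<circ> v, v \<circ> f}"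
    using \<open>y \<in> V\<close> unfolding gen_step_def by (blast intro: closed)
  then have "(v y, v ((v \<circ> f) y)) \<in> gen_step V {a \<circ> v, v \<circ> f}"
    using \<open>y \<in> V\<close> by (simp add: closed commute)
  ultimately show "(v y, v (g y)) \<in> even_rel" using g by auto
qed

lemma edge_even_rel:
  assumes "E p q"
  shows "(v p, q) \<in> even_rel"
proof -
  have "p \<in> V" using edge[OF assms] by blast
  then have "(v p, g (v p)) \<in> gen_step V {a \<circ> v, v \<circ> f}" if "g \<in> {a \<circ> v, v \<circ> f}" for g
    using that unfolding gen_step_def by (blast intro: closed)
  moreover have "(a \<circ> v) (v p) = a p" "(v \<circ> f) (v p) = f p"
    using \<open>p \<in> V\<close> by (simp_all add: closed commute)
  ultimately show ?thesis using neighbours[OF assms] by force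
qed

lemma neighbours_even_rel:
  assumes "E x y" "E x y'"
  shows "(y, y') \<in> even_rel"
  using even_rel_trans[OF even_rel_sym[OF edge_even_rel[OF assms(1)]] edge_even_rel[OF assms(2)]] .

lemma gen_step_walk:
  assumes "(x, y) \<in> gen_step V {a \<circ> v, v, f}"
  shows "(x, y) \<in> {(x, y). E x y}\<^sup>*"
proof -
  let ?W = "{(x, y). E x y}\<^sup>*"
  have "sym {(x, y). E x y}" unfolding sym_def using edge by blast
  then have "sym ?W" by (rule sym_rtrancl)
  have "(y, g y) \<in> ?W" if "y \<in> V" "g \<in> {a \<circ> v, v, f}" for y g
  proof -
    have "(y, v y) \<in> ?W" "(v y, a (v y)) \<in> ?W" "(y, f y) \<in> ?W"
      using \<open>y \<in> V\<close> by (auto simp: closed edges)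
    then show ?thesis using that(2) by (auto intro: rtrancl_trans)
  qed
  then show ?thesis
    using assms symD[OF \<open>sym ?W\<close>] unfolding gen_step_def by blast
qed

lemma orbit_even_rel:
  assumes "(p, y) \<in> (gen_step V {a \<circ> v, v, f})\<^sup>*" "p \<in> V"
  shows "(y, p) \<in> even_rel \<or> (y, v p) \<in> even_rel"
proof -
  have walk: "(p, y) \<in> {(x, y). E x y}\<^sup>*"
    using rtrancl_subset_rtrancl[of _ "{(x, y). E x y}"] gen_step_walk assms(1) by blast
  have "(y, p) \<in> even_rel \<or> (\<exists>w. (w, p) \<in> even_rel \<and> E w y)"
  proof (rule walk_end_equiv_or_adjacent[OF sym_even_rel trans_even_rel rtrancl_refl _ _ walk])
    show "E y x" if "E x y" for x y using edge[OF that] by blast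
    show "(y, y') \<in> even_rel" if "E x y" "E x y'" for x y y'
      using neighbours_even_rel[OF that] .
  qed
  moreover have "(y, v p) \<in> even_rel" if "(w, p) \<in> even_rel" "E w y" for w
    using even_rel_trans[OF even_rel_sym[OF edge_even_rel[OF that(2)]] even_rel_v[OF that(1)]] .
  ultimately show ?thesis by blast
qed

lemma amap_nonorientable_iff:
  "amap_nonorientable V (a \<circ> v) v f \<longleftrightarrow> (\<exists>p\<in>V. (p, v p) \<in> even_rel)"
proof
  assume "amap_nonorientable V (a \<circ> v) v f"
  then obtain x where "x \<in> V" and transitive: "\<forall>y\<in>gen_orbit V {a \<circ> v, v, f} x.
      \<forall>z\<in>gen_orbit V {a \<circ> v, v, f} x. z \<in> gen_orbit V {a \<circ> v, v \<circ> f} y"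
    unfolding amap_nonorientable_def by blast
  have "(x, v x) \<in> gen_step V {a \<circ> v, v, f}"
    using \<open>x \<in> V\<close> unfolding gen_step_def by blast
  then have "x \<in> gen_orbit V {a \<circ> v, v, f} x" "v x \<in> gen_orbit V {a \<circ> v, v, f} x"
    unfolding gen_orbit_def by auto
  with transitive have "(x, v x) \<in> even_rel" unfolding gen_orbit_def by blast
  with \<open>x \<in> V\<close> show "\<exists>p\<in>V. (p, v p) \<in> even_rel" by blast
next
  assume "\<exists>p\<in>V. (p, v p) \<in> even_rel"
  then obtain p where "p \<in> V" "(p, v p) \<in> even_rel" by blast
  have to_p: "(y, p) \<in> even_rel" if "y \<in> gen_orbit V {a \<circ> v, v, f} p" for y
  proof -
    from that have "(y, p) \<in> even_rel \<or> (y, v p) \<in> even_rel"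
      unfolding gen_orbit_def using orbit_even_rel \<open>p \<in> V\<close> by blast
    then show ?thesis
      using even_rel_trans[OF _ even_rel_sym[OF \<open>(p, v p) \<in> even_rel\<close>]] by blast
  qed
  have "z \<in> gen_orbit V {a \<circ> v, v \<circ> f} y"
    if "y \<in> gen_orbit V {a \<circ> v, v, f} p" "z \<in> gen_orbit V {a \<circ> v, v, f} p" for y z
    using even_rel_trans[OF to_p[OF that(1)] even_rel_sym[OF to_p[OF that(2)]]]
    unfolding gen_orbit_def by simp
  with \<open>p \<in> V\<close> show "amap_nonorientable V (a \<circ> v) v f"
    unfolding amap_nonorientable_def by blast
qed

lemma bipartite_iff: "bipartite V E \<longleftrightarrow> (\<forall>p\<in>V. (p, v p) \<notin> even_rel)"
proof
  assume "bipartite V E"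
  then obtain c :: "'a \<Rightarrow> bool" where "\<forall>x\<in>V. \<forall>y\<in>V. E x y \<longrightarrow> c x \<noteq> c y"
    unfolding bipartite_def by blast
  then have proper: "c x \<noteq> c y" if "E x y" for x y using edge[OF that] that by blast
  have preserved: "c (g y) = c y" if "g \<in> {a \<circ> v, v \<circ> f}" "y \<in> V" for g y
  proof -
    have "c y \<noteq> c (v y)" "c (v y) \<noteq> c (a (v y))" "c y \<noteq> c (f y)" "c (f y) \<noteq> c (v (f y))"
      using proper[OF edges(1)[OF \<open>y \<in> V\<close>]] proper[OF edges(3)[OF closed(1)[OF \<open>y \<in> V\<close>]]]
        proper[OF edges(2)[OF \<open>y \<in> V\<close>]] proper[OF edges(1)[OF closed(2)[OF \<open>y \<in> V\<close>]]]
      by auto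
    then show ?thesis using that(1) by auto
  qed
  show "\<forall>p\<in>V. (p, v p) \<notin> even_rel"
  proof (intro ballI notI)
    fix p assume "p \<in> V" "(p, v p) \<in> even_rel"
    then have "c (v p) = c p"
      using gen_step_rtrancl_invariant[of "{a \<circ> v, v \<circ> f}" V c p "v p"] preserved by blast
    with proper[OF edges(1)[OF \<open>p \<in> V\<close>]] show False by simp
  qed
next
  assume no_loop: "\<forall>p\<in>V. (p, v p) \<notin> even_rel"
  show "bipartite V E"
  proof (rule bipartite_by_equivalence[of V even_rel])
    show "refl_on V even_rel" by (simp add: refl_on_def)
    show "sym even_rel" by (rule sym_even_rel)
    show "trans even_rel" by (rule trans_even_rel)
    show "x \<in> V \<and> y \<in> V \<and> E y x" if "E x y" for x y using edge[OF that] .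
  next
    fix x y x' y' assume "(x, y) \<in> even_rel" "E x x'" "E y y'"
    show "(x', y') \<in> even_rel"
      using even_rel_trans[OF even_rel_sym[OF edge_even_rel[OF \<open>E x x'\<close>]]
          even_rel_trans[OF even_rel_v[OF \<open>(x, y) \<in> even_rel\<close>] edge_even_rel[OF \<open>E y y'\<close>]]] .
  next
    fix x y assume "E x y"
    show "(x, y) \<notin> even_rel"
    proof
      assume "(x, y) \<in> even_rel"
      then have "(x, v x) \<in> even_rel"
        using even_rel_trans even_rel_sym[OF edge_even_rel[OF \<open>E x y\<close>]] by blast
      then show False using no_loop edge[OF \<open>E x y\<close>] by blast
    qed
  qed
qed

end

theorem proposition1p2:
  fixes V :: "'a set" and E :: "'a \<Rightarrow> 'a \<Rightarrow> bool" and v f :: "'a \<Rightarrow> 'a"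
  assumes "is_map V E v f"
  shows "map_orientable V E v f \<longleftrightarrow> amap_orientable V (amatch E v f \<circ> v) v f"
proof -
  interpret cubic_map V E v f by (rule cubic_map.intro) (fact assms)
  show ?thesis
    unfolding map_orientable_def amap_orientable_def
    using bipartite_iff amap_nonorientable_iff by blast
qed

end
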